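(* Let $W_{(\alpha,\beta)}=(T_1,T_2)$ be a commuting 2-variable weighted shift and let $L=\begin{pmatrix} T_1^*T_1 & T_2^*T_1\\ T_1^*T_2 & T_2^*T_2\end{pmatrix}$. Then the following are equivalent: (a) $L\ge0$; (b) $\alpha_{\mathbf{k}+\varepsilon_2}\beta_{\mathbf{k}+\varepsilon_1}\le\alpha_{\mathbf{k}+\varepsilon_1}\beta_{\mathbf{k}+\varepsilon_2}$ for all $\mathbf{k}\in\mathbb{Z}_+^2$; (c) $\gamma_{\mathbf{k}+\varepsilon_1+\varepsilon_2}^2\le\gamma_{\mathbf{k}+2\varepsilon_1}\gamma_{\mathbf{k}+2\varepsilon_2}$ for all $\mathbf{k}\in\mathbb{Z}_+^2$.
   Context: A 2-variable weighted shift $W_{(\alpha,\beta)}=(T_1,T_2)$ on $\ell^2(\mathbb{Z}_+^2)$ (orthonormal basis $\{e_{\mathbf{k}}\}$) is given by bounded positive weights via $T_1e_{\mathbf{k}}=\alpha_{\mathbf{k}}e_{\mathbf{k}+\varepsilon_1}$, $T_2e_{\mathbf{k}}=\beta_{\mathbf{k}}e_{\mathbf{k}+\varepsilon_2}$, $\varepsilon_1=(1,0)$, $\varepsilon_2=(0,1)$; it is commuting iff $\beta_{\mathbf{k}+\varepsilon_1}\alpha_{\mathbf{k}}=\alpha_{\mathbf{k}+\varepsilon_2}\beta_{\mathbf{k}}$ for all $\mathbf{k}$. The moments are $\gamma_{(0,0)}=1$ and, for $\mathbf{k}=(k_1,k_2)$, $\gamma_{\mathbf{k}}=\alpha_{(0,0)}^2\cdots\alpha_{(k_1-1,0)}^2\,\beta_{(k_1,0)}^2\cdots\beta_{(k_1,k_2-1)}^2$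 (empty products equal $1$). *)

theory Defs
  imports "HOL-Analysis.Analysis" "HOL-Library.Complex_Order"
begin

type_synonym idx = "nat \<times> nat"

definition ell2 :: "(idx \<Rightarrow> complex) set" where
  "ell2 = {x. (\<lambda>k. (cmod (x k))\<^sup>2) summable_on UNIV}"

definition l2inner :: "(idx \<Rightarrow> complex) \<Rightarrow> (idx \<Rightarrow> complex) \<Rightarrow> complex" where
  "l2inner x y = (\<Sum>\<^sub>\<infinity>k. x k * cnj (y k))"

text \<open>T1 e_k = alpha_k e_(k+eps1), T2 e_k = beta_k e_(k+eps2), acting on coordinates.\<close>
definition T1 :: "(idx \<Rightarrow> real) \<Rightarrow> (idx \<Rightarrow> complex) \<Rightarrow> (idx \<Rightarrow> complex)" where
  "T1 \<alpha> x = (\<lambda>(k1,k2). if k1 = 0 then 0 else complex_of_real (\<alpha> (k1-1,k2)) * x (k1-1,k2))"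

definition T2 :: "(idx \<Rightarrow> real) \<Rightarrow> (idx \<Rightarrow> complex) \<Rightarrow> (idx \<Rightarrow> complex)" where
  "T2 \<beta> x = (\<lambda>(k1,k2). if k2 = 0 then 0 else complex_of_real (\<beta> (k1,k2-1)) * x (k1,k2-1))"

definition T1adj :: "(idx \<Rightarrow> real) \<Rightarrow> (idx \<Rightarrow> complex) \<Rightarrow> (idx \<Rightarrow> complex)" where
  "T1adj \<alpha> x = (\<lambda>(k1,k2). complex_of_real (\<alpha> (k1,k2)) * x (k1+1,k2))"

definition T2adj :: "(idx \<Rightarrow> real) \<Rightarrow> (idx \<Rightarrow> complex) \<Rightarrow> (idx \<Rightarrow> complex)" where
  "T2adj \<beta> x = (\<lambda>(k1,k2). complex_of_real (\<beta> (k1,k2)) * x (k1,k2+1))"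

definition Lop :: "(idx \<Rightarrow> real) \<Rightarrow> (idx \<Rightarrow> real) \<Rightarrow>
    (idx \<Rightarrow> complex) \<times> (idx \<Rightarrow> complex) \<Rightarrow> (idx \<Rightarrow> complex) \<times> (idx \<Rightarrow> complex)" where
  "Lop \<alpha> \<beta> v = (let x = fst v; y = snd v in
     (\<lambda>k. T1adj \<alpha> (T1 \<alpha> x) k + T2adj \<beta> (T1 \<alpha> y) k,
      \<lambda>k. T1adj \<alpha> (T2 \<beta> x) k + T2adj \<beta> (T2 \<beta> y) k))"

definition L_positive :: "(idx \<Rightarrow> real) \<Rightarrow> (idx \<Rightarrow> real) \<Rightarrow> bool" where
  "L_positive \<alpha> \<beta> = (\<forall>x\<in>ell2. \<forall>y\<in>ell2.
     0 \<le> l2inner (fst (Lop \<alpha> \<beta> (x,y))) x + l2inner (snd (Lop \<alpha> \<beta> (x,y))) y)"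

definition weighted_shift :: "(idx \<Rightarrow> real) \<Rightarrow> (idx \<Rightarrow> real) \<Rightarrow> bool" where
  "weighted_shift \<alpha> \<beta> = ((\<forall>k. 0 < \<alpha> k \<and> 0 < \<beta> k) \<and> bdd_above (range \<alpha>) \<and> bdd_above (range \<beta>))"

definition commuting_shift :: "(idx \<Rightarrow> real) \<Rightarrow> (idx \<Rightarrow> real) \<Rightarrow> bool" where
  "commuting_shift \<alpha> \<beta> = (\<forall>k1 k2. \<beta> (k1+1,k2) * \<alpha> (k1,k2) = \<alpha> (k1,k2+1) * \<beta> (k1,k2))"

definition moment :: "(idx \<Rightarrow> real) \<Rightarrow> (idx \<Rightarrow> real) \<Rightarrow> idx \<Rightarrow> real" where
  "moment \<alpha> \<beta> k = (\<Prod>i<fst k. (\<alpha> (i,0))\<^sup>2) * (\<Prod>j<snd k. (\<beta> (fst k, j))\<^sup>2)"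

end

theory Submission
  imports Defs
begin

(* The quadratic form of L is <L(x,y),(x,y)> = |T1 x|^2 + |T2 y|^2 + 2 Re <T1 y, T2 x>, and
   <T1 y, T2 x> pairs each coordinate x(k + eps1) with the single coordinate y(k + eps2), with
   weight alpha(k + eps2) beta(k + eps1).  So the form is a sum of nonnegative diagonal terms and of
   the 2x2 forms [[alpha(k + eps1)^2, alpha(k + eps2) beta(k + eps1)],
   [alpha(k + eps2) beta(k + eps1), beta(k + eps2)^2]], each of which is positive iff (b) holds at k:
   a test vector supported on {k + eps1} x {k + eps2} gives necessity, AM-GM gives sufficiency.
   Commutativity gives gamma(k + eps1 + eps2) = c alpha(k + eps2) beta(k + eps1) and
   gamma(k + 2 eps1) gamma(k + 2 eps2) = (c alpha(k + eps1) beta(k + eps2))^2 with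
   c = gamma(k) alpha(k) beta(k) > 0, so (c) is (b) squared. *)

lemma has_sum_comp_inj_iff:
  assumes "inj h" and "\<And>x. x \<notin> range h \<Longrightarrow> f x = 0"
  shows "((f \<circ> h) has_sum s) UNIV \<longleftrightarrow> (f has_sum s) UNIV"
proof -
  have "((f \<circ> h) has_sum s) UNIV \<longleftrightarrow> (f has_sum s) (range h)"
    using has_sum_reindex[OF assms(1), of f s] by simp
  also have "\<dots> \<longleftrightarrow> (f has_sum s) UNIV"
    by (rule has_sum_cong_neutral) (use assms(2) in auto)
  finally show ?thesis .
qed

lemma infsum_comp_inj_le:
  fixes f :: "'a \<Rightarrow> real"
  assumes "f summable_on UNIV" and "\<And>x. 0 \<le> f x" and "inj h"
  shows "(f \<circ> h) summable_on UNIV" and "infsum (f \<circ> h) UNIV \<le> infsum f UNIV"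
proof -
  have "f summable_on range h"
    using summable_on_subset_banach[OF assms(1)] by simp
  then show "(f \<circ> h) summable_on UNIV"
    using summable_on_reindex[OF assms(3), of f] by simp
  have "infsum (f \<circ> h) UNIV = infsum f (range h)"
    using infsum_reindex[OF assms(3), of f] by simp
  also have "\<dots> \<le> infsum f UNIV"
    by (rule infsum_mono_neutral) (use \<open>f summable_on range h\<close> assms(1,2) in auto)
  finally show "infsum (f \<circ> h) UNIV \<le> infsum f UNIV" .
qed

lemma has_sum_single_point:
  assumes "\<And>k. k \<noteq> j \<Longrightarrow> f k = 0"
  shows "(f has_sum f j) UNIV"
  by (rule has_sum_finite_neutralI[of "{j}"]) (use assms in auto)

lemma ell2_comp_inj: "x \<in> ell2 \<Longrightarrow> inj h \<Longrightarrow> x \<circ> h \<in> ell2"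
  using infsum_comp_inj_le(1)[of "\<lambda>k. (cmod (x k))\<^sup>2" h] by (simp add: ell2_def comp_def)

lemma ell2_single: "(\<lambda>k. if k = j then c else 0) \<in> ell2"
  unfolding ell2_def summable_on_def
  using has_sum_single_point[of j "\<lambda>k. (cmod (if k = j then c else 0))\<^sup>2"] by auto

lemma weighted_shift_pos:
  assumes "weighted_shift \<alpha> \<beta>"
  shows "0 < \<alpha> k" and "0 < \<beta> k"
  using assms unfolding weighted_shift_def by (cases k; simp)+

lemma weighted_shift_bounded:
  assumes "weighted_shift \<alpha> \<beta>"
  obtains M where "\<And>k. \<bar>\<alpha> k\<bar> \<le> M" and "\<And>k. \<bar>\<beta> k\<bar> \<le> M"
proof -
  obtain Ma Mb where "\<And>k. \<alpha> k \<le> Ma" and "\<And>k. \<beta> k \<le> Mb"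
    using assms unfolding weighted_shift_def bdd_above_def by auto
  then have "\<bar>\<alpha> k\<bar> \<le> max Ma Mb" and "\<bar>\<beta> k\<bar> \<le> max Ma Mb" for k
    using weighted_shift_pos[OF assms, of k] by (auto simp: le_max_iff_disj)
  then show thesis by (rule that)
qed

lemma weighted_ell2_summable:
  assumes "\<And>k. \<bar>w k\<bar> \<le> M" and "x \<in> ell2"
  shows "(\<lambda>k. (w k * cmod (x k))\<^sup>2) summable_on UNIV"
proof (rule summable_on_comparison_test)
  show "(\<lambda>k. M\<^sup>2 * (cmod (x k))\<^sup>2) summable_on UNIV"
    using assms(2) by (intro summable_on_cmult_right) (simp add: ell2_def)
  show "(w k * cmod (x k))\<^sup>2 \<le> M\<^sup>2 * (cmod (x k))\<^sup>2" for k
    using power_mono[OF assms(1)[of k], of 2] by (simp add: power_mult_distrib mult_right_mono)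
qed simp

definition add_eps1 :: "idx \<Rightarrow> idx" where
  "add_eps1 = (\<lambda>(i,j). (Suc i, j))"

definition add_eps2 :: "idx \<Rightarrow> idx" where
  "add_eps2 = (\<lambda>(i,j). (i, Suc j))"

lemma inj_add_eps1: "inj add_eps1"
  by (auto simp: inj_def add_eps1_def)

lemma inj_add_eps2: "inj add_eps2"
  by (auto simp: inj_def add_eps2_def)

lemma not_in_range_add_eps1: "k \<notin> range add_eps1 \<longleftrightarrow> fst k = 0"
  by (cases k) (auto simp: add_eps1_def image_iff dest: not0_implies_Suc)

lemma not_in_range_add_eps2: "k \<notin> range add_eps2 \<longleftrightarrow> snd k = 0"
  by (cases k) (auto simp: add_eps2_def image_iff dest: not0_implies_Suc)

definition cross_term ::
    "(idx \<Rightarrow> real) \<Rightarrow> (idx \<Rightarrow> real) \<Rightarrow> (idx \<Rightarrow> complex) \<Rightarrow> (idx \<Rightarrow> complex) \<Rightarrow> idx \<Rightarrow> complex" where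
  "cross_term \<alpha> \<beta> x y k =
     complex_of_real (\<alpha> (add_eps2 k) * \<beta> (add_eps1 k)) * y (add_eps2 k) * cnj (x (add_eps1 k))"

lemma of_real_weighted_norm_square:
  "complex_of_real ((a * cmod z)\<^sup>2) = of_real (a\<^sup>2) * (z * cnj z)"
  by (simp only: power_mult_distrib of_real_mult complex_norm_square)

lemma Lop_fst_mult_cnj:
  "fst k = 0 \<Longrightarrow> fst (Lop \<alpha> \<beta> (x,y)) k * cnj (x k) = of_real ((\<alpha> k * cmod (x k))\<^sup>2)"
  "fst (Lop \<alpha> \<beta> (x,y)) (add_eps1 k) * cnj (x (add_eps1 k))
     = of_real ((\<alpha> (add_eps1 k) * cmod (x (add_eps1 k)))\<^sup>2) + cross_term \<alpha> \<beta> x y k"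
  unfolding of_real_weighted_norm_square
  by (cases k; simp add: Lop_def T1_def T1adj_def T2adj_def cross_term_def add_eps1_def add_eps2_def
      power2_eq_square algebra_simps)+

lemma Lop_snd_mult_cnj:
  "snd k = 0 \<Longrightarrow> snd (Lop \<alpha> \<beta> (x,y)) k * cnj (y k) = of_real ((\<beta> k * cmod (y k))\<^sup>2)"
  "snd (Lop \<alpha> \<beta> (x,y)) (add_eps2 k) * cnj (y (add_eps2 k))
     = of_real ((\<beta> (add_eps2 k) * cmod (y (add_eps2 k)))\<^sup>2) + cnj (cross_term \<alpha> \<beta> x y k)"
  unfolding of_real_weighted_norm_square
  by (cases k; simp add: Lop_def T2_def T1adj_def T2adj_def cross_term_def add_eps1_def add_eps2_def
      power2_eq_square algebra_simps)+

lemma cross_term_summable: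
  assumes "\<And>k. \<bar>\<alpha> k\<bar> \<le> M" and "\<And>k. \<bar>\<beta> k\<bar> \<le> M" and "x \<in> ell2" and "y \<in> ell2"
  shows "cross_term \<alpha> \<beta> x y summable_on UNIV"
  unfolding summable_on_iff_abs_summable_on_complex
proof (rule summable_on_comparison_test)
  let ?u = "\<lambda>k. (cmod (x (add_eps1 k)))\<^sup>2" and ?v = "\<lambda>k. (cmod (y (add_eps2 k)))\<^sup>2"
  have "x \<circ> add_eps1 \<in> ell2" and "y \<circ> add_eps2 \<in> ell2"
    using assms(3,4) inj_add_eps1 inj_add_eps2 by (auto intro: ell2_comp_inj)
  then show "(\<lambda>k. M\<^sup>2 * (?u k + ?v k)) summable_on UNIV"
    by (intro summable_on_cmult_right summable_on_add) (simp_all add: ell2_def comp_def)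
  fix k
  have "\<bar>\<alpha> (add_eps2 k) * \<beta> (add_eps1 k)\<bar> \<le> M\<^sup>2"
    unfolding abs_mult power2_eq_square by (intro mult_mono assms) (auto intro: order_trans[OF _ assms(1)])
  moreover have "cmod (x (add_eps1 k)) * cmod (y (add_eps2 k)) \<le> ?u k + ?v k"
    using sum_squares_bound[of "cmod (x (add_eps1 k))" "cmod (y (add_eps2 k))"]
      mult_nonneg_nonneg[OF norm_ge_zero norm_ge_zero, of "x (add_eps1 k)" "y (add_eps2 k)"]
    by linarith
  ultimately have "\<bar>\<alpha> (add_eps2 k) * \<beta> (add_eps1 k)\<bar> * (cmod (x (add_eps1 k)) * cmod (y (add_eps2 k)))
      \<le> M\<^sup>2 * (?u k + ?v k)"
    by (intro mult_mono) auto
  then show "norm (cross_term \<alpha> \<beta> x y k) \<le> M\<^sup>2 * (?u k + ?v k)"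
    by (simp add: cross_term_def norm_mult abs_mult mult_ac)
qed simp

lemma Lop_quadratic_form:
  assumes "weighted_shift \<alpha> \<beta>" and "x \<in> ell2" and "y \<in> ell2"
  shows "l2inner (fst (Lop \<alpha> \<beta> (x,y))) x + l2inner (snd (Lop \<alpha> \<beta> (x,y))) y
       = of_real ((\<Sum>\<^sub>\<infinity>k. (\<alpha> k * cmod (x k))\<^sup>2) + (\<Sum>\<^sub>\<infinity>k. (\<beta> k * cmod (y k))\<^sup>2)
                  + 2 * Re (\<Sum>\<^sub>\<infinity>k. cross_term \<alpha> \<beta> x y k))"
proof -
  obtain M where M: "\<And>k. \<bar>\<alpha> k\<bar> \<le> M" "\<And>k. \<bar>\<beta> k\<bar> \<le> M"
    using weighted_shift_bounded[OF assms(1)] by blast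
  define A where "A = (\<Sum>\<^sub>\<infinity>k. (\<alpha> k * cmod (x k))\<^sup>2)"
  define B where "B = (\<Sum>\<^sub>\<infinity>k. (\<beta> k * cmod (y k))\<^sup>2)"
  define C where "C = (\<Sum>\<^sub>\<infinity>k. cross_term \<alpha> \<beta> x y k)"
  have A: "((\<lambda>k. of_real ((\<alpha> k * cmod (x k))\<^sup>2)) has_sum complex_of_real A) UNIV"
    unfolding A_def using M(1) assms(2) by (intro has_sum_of_real has_sum_infsum weighted_ell2_summable)
  have B: "((\<lambda>k. of_real ((\<beta> k * cmod (y k))\<^sup>2)) has_sum complex_of_real B) UNIV"
    unfolding B_def using M(2) assms(3) by (intro has_sum_of_real has_sum_infsum weighted_ell2_summable)
  have C: "(cross_term \<alpha> \<beta> x y has_sum C) UNIV"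
    unfolding C_def using M assms(2,3) by (intro has_sum_infsum cross_term_summable)
  have "((\<lambda>k. fst (Lop \<alpha> \<beta> (x,y)) k * cnj (x k) - of_real ((\<alpha> k * cmod (x k))\<^sup>2)) has_sum C) UNIV"
    by (subst has_sum_comp_inj_iff[OF inj_add_eps1, symmetric])
      (simp_all add: not_in_range_add_eps1 Lop_fst_mult_cnj comp_def C)
  from has_sum_add[OF A this] have fst_form: "l2inner (fst (Lop \<alpha> \<beta> (x,y))) x = of_real A + C"
    unfolding l2inner_def by (simp add: infsumI)
  have "((\<lambda>k. snd (Lop \<alpha> \<beta> (x,y)) k * cnj (y k) - of_real ((\<beta> k * cmod (y k))\<^sup>2)) has_sum cnj C) UNIV"
    by (subst has_sum_comp_inj_iff[OF inj_add_eps2, symmetric])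
      (simp_all add: not_in_range_add_eps2 Lop_snd_mult_cnj comp_def C)
  from has_sum_add[OF B this] have snd_form: "l2inner (snd (Lop \<alpha> \<beta> (x,y))) y = of_real B + cnj C"
    unfolding l2inner_def by (simp add: infsumI)
  show ?thesis
    unfolding fst_form snd_form A_def[symmetric] B_def[symmetric] C_def[symmetric]
    using complex_add_cnj[of C] by simp
qed

lemma L_positive_imp_weight_ineq:
  assumes "weighted_shift \<alpha> \<beta>" and "L_positive \<alpha> \<beta>"
  shows "\<alpha> (add_eps2 k) * \<beta> (add_eps1 k) \<le> \<alpha> (add_eps1 k) * \<beta> (add_eps2 k)"
proof -
  define p where "p = \<alpha> (add_eps1 k) * \<beta> (add_eps2 k)"
  define q where "q = \<alpha> (add_eps2 k) * \<beta> (add_eps1 k)"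
  define x where "x = (\<lambda>k'. if k' = add_eps1 k then complex_of_real (\<beta> (add_eps2 k)) else 0)"
  define y where "y = (\<lambda>k'. if k' = add_eps2 k then complex_of_real (- \<alpha> (add_eps1 k)) else 0)"
  have pos: "0 < \<alpha> k'" "0 < \<beta> k'" for k'
    using weighted_shift_pos[OF assms(1)] by auto
  have "x \<in> ell2" and "y \<in> ell2"
    unfolding x_def y_def by (rule ell2_single)+
  have sum_x: "(\<Sum>\<^sub>\<infinity>k'. (\<alpha> k' * cmod (x k'))\<^sup>2) = p\<^sup>2"
    using pos by (subst infsumI[OF has_sum_single_point[of "add_eps1 k"]])
      (auto simp: x_def p_def power_mult_distrib)
  have sum_y: "(\<Sum>\<^sub>\<infinity>k'. (\<beta> k' * cmod (y k'))\<^sup>2) = p\<^sup>2"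
    using pos by (subst infsumI[OF has_sum_single_point[of "add_eps2 k"]])
      (auto simp: y_def p_def power_mult_distrib)
  have sum_cross: "(\<Sum>\<^sub>\<infinity>k'. cross_term \<alpha> \<beta> x y k') = of_real (- p * q)"
    by (subst infsumI[OF has_sum_single_point[of k]])
      (auto simp: cross_term_def x_def y_def p_def q_def inj_eq[OF inj_add_eps2])
  have "l2inner (fst (Lop \<alpha> \<beta> (x,y))) x + l2inner (snd (Lop \<alpha> \<beta> (x,y))) y
      = of_real (2 * p * (p - q))"
    unfolding Lop_quadratic_form[OF assms(1) \<open>x \<in> ell2\<close> \<open>y \<in> ell2\<close>] sum_x sum_y sum_cross
    by (simp add: algebra_simps power2_eq_square)
  moreover have "0 \<le> l2inner (fst (Lop \<alpha> \<beta> (x,y))) x + l2inner (snd (Lop \<alpha> \<beta> (x,y))) y"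
    using assms(2) \<open>x \<in> ell2\<close> \<open>y \<in> ell2\<close> unfolding L_positive_def by blast
  ultimately have "0 \<le> 2 * p * (p - q)"
    by (simp add: less_eq_complex_def)
  moreover have "0 < p"
    using pos by (simp add: p_def)
  ultimately show ?thesis
    by (simp add: p_def q_def zero_le_mult_iff)
qed

lemma cross_term_norm_le:
  assumes "0 \<le> \<alpha> (add_eps2 k)" and "0 \<le> \<beta> (add_eps1 k)"
    and "\<alpha> (add_eps2 k) * \<beta> (add_eps1 k) \<le> \<alpha> (add_eps1 k) * \<beta> (add_eps2 k)"
  shows "2 * cmod (cross_term \<alpha> \<beta> x y k)
    \<le> (\<alpha> (add_eps1 k) * cmod (x (add_eps1 k)))\<^sup>2 + (\<beta> (add_eps2 k) * cmod (y (add_eps2 k)))\<^sup>2"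
proof -
  have "cmod (cross_term \<alpha> \<beta> x y k)
      = (\<alpha> (add_eps2 k) * \<beta> (add_eps1 k)) * (cmod (x (add_eps1 k)) * cmod (y (add_eps2 k)))"
    using assms(1,2) by (simp add: cross_term_def norm_mult abs_mult)
  also have "\<dots> \<le> (\<alpha> (add_eps1 k) * \<beta> (add_eps2 k)) * (cmod (x (add_eps1 k)) * cmod (y (add_eps2 k)))"
    using assms(3) by (rule mult_right_mono) simp
  also have "\<dots> = (\<alpha> (add_eps1 k) * cmod (x (add_eps1 k))) * (\<beta> (add_eps2 k) * cmod (y (add_eps2 k)))"
    by (simp add: mult_ac)
  finally show ?thesis
    using sum_squares_bound[of "\<alpha> (add_eps1 k) * cmod (x (add_eps1 k))" "\<beta> (add_eps2 k) * cmod (y (add_eps2 k))"]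
    by simp
qed

lemma weight_ineq_imp_L_positive:
  assumes "weighted_shift \<alpha> \<beta>"
    and "\<And>k. \<alpha> (add_eps2 k) * \<beta> (add_eps1 k) \<le> \<alpha> (add_eps1 k) * \<beta> (add_eps2 k)"
  shows "L_positive \<alpha> \<beta>"
  unfolding L_positive_def
proof (intro ballI)
  fix x y assume "x \<in> ell2" and "y \<in> ell2"
  obtain M where M: "\<And>k. \<bar>\<alpha> k\<bar> \<le> M" "\<And>k. \<bar>\<beta> k\<bar> \<le> M"
    using weighted_shift_bounded[OF assms(1)] by blast
  define a where "a k = (\<alpha> k * cmod (x k))\<^sup>2" for k
  define b where "b k = (\<beta> k * cmod (y k))\<^sup>2" for k
  define c where "c = cross_term \<alpha> \<beta> x y"
  have a: "a summable_on UNIV" and b: "b summable_on UNIV"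
    unfolding a_def b_def using M \<open>x \<in> ell2\<close> \<open>y \<in> ell2\<close> by (metis weighted_ell2_summable)+
  have a_nonneg: "0 \<le> a k" and b_nonneg: "0 \<le> b k" for k
    by (simp_all add: a_def b_def)
  have c: "(\<lambda>k. cmod (c k)) summable_on UNIV"
    using cross_term_summable[OF M \<open>x \<in> ell2\<close> \<open>y \<in> ell2\<close>]
    by (simp add: c_def summable_on_iff_abs_summable_on_complex)
  have c_bound: "2 * cmod (c k) \<le> a (add_eps1 k) + b (add_eps2 k)" for k
    unfolding a_def b_def c_def
    using weighted_shift_pos[OF assms(1)] assms(2) by (simp add: cross_term_norm_le less_imp_le)
  have "- Re (infsum c UNIV) \<le> cmod (infsum c UNIV)"
    using abs_Re_le_cmod[of "infsum c UNIV"] by linarith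
  also have "\<dots> \<le> (\<Sum>\<^sub>\<infinity>k. cmod (c k))"
    using c by (rule norm_infsum_bound)
  also have "2 * \<dots> \<le> infsum (a \<circ> add_eps1) UNIV + infsum (b \<circ> add_eps2) UNIV"
  proof (rule has_sum_mono)
    show "((\<lambda>k. 2 * cmod (c k)) has_sum 2 * (\<Sum>\<^sub>\<infinity>k. cmod (c k))) UNIV"
      using c by (intro has_sum_cmult_right has_sum_infsum)
    show "((\<lambda>k. (a \<circ> add_eps1) k + (b \<circ> add_eps2) k)
            has_sum infsum (a \<circ> add_eps1) UNIV + infsum (b \<circ> add_eps2) UNIV) UNIV"
      using infsum_comp_inj_le(1)[OF a a_nonneg inj_add_eps1] infsum_comp_inj_le(1)[OF b b_nonneg inj_add_eps2]
      by (intro has_sum_add has_sum_infsum)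
  qed (simp add: c_bound)
  also have "\<dots> \<le> infsum a UNIV + infsum b UNIV"
    using infsum_comp_inj_le(2)[OF a a_nonneg inj_add_eps1] infsum_comp_inj_le(2)[OF b b_nonneg inj_add_eps2]
    by (rule add_mono)
  finally have "0 \<le> infsum a UNIV + infsum b UNIV + 2 * Re (infsum c UNIV)"
    by linarith
  then show "0 \<le> l2inner (fst (Lop \<alpha> \<beta> (x,y))) x + l2inner (snd (Lop \<alpha> \<beta> (x,y))) y"
    unfolding Lop_quadratic_form[OF assms(1) \<open>x \<in> ell2\<close> \<open>y \<in> ell2\<close>]
    by (simp add: a_def[abs_def] b_def[abs_def] c_def less_eq_complex_def)
qed

lemma moment_Suc_snd: "moment \<alpha> \<beta> (i, Suc j) = moment \<alpha> \<beta> (i, j) * (\<beta> (i, j))\<^sup>2"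
  by (simp add: moment_def mult_ac)

lemma moment_Suc_fst:
  assumes "commuting_shift \<alpha> \<beta>"
  shows "moment \<alpha> \<beta> (Suc i, j) = moment \<alpha> \<beta> (i, j) * (\<alpha> (i, j))\<^sup>2"
proof (induction j)
  case 0
  then show ?case by (simp add: moment_def)
next
  case (Suc j)
  have "\<beta> (Suc i, j) * \<alpha> (i, j) = \<alpha> (i, Suc j) * \<beta> (i, j)"
    using assms unfolding commuting_shift_def by simp
  then show ?case
    using Suc by (simp add: moment_Suc_snd power_mult_distrib[symmetric] mult_ac)
qed

lemma moment_pos:
  assumes "weighted_shift \<alpha> \<beta>"
  shows "0 < moment \<alpha> \<beta> k"
  using weighted_shift_pos[OF assms] unfolding moment_def
  by (intro mult_pos_pos prod_pos zero_less_power) auto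

lemma moment_ineq_iff_weight_ineq:
  assumes "weighted_shift \<alpha> \<beta>" and "commuting_shift \<alpha> \<beta>"
  shows "(moment \<alpha> \<beta> (Suc i, Suc j))\<^sup>2 \<le> moment \<alpha> \<beta> (Suc (Suc i), j) * moment \<alpha> \<beta> (i, Suc (Suc j))
     \<longleftrightarrow> \<alpha> (i, Suc j) * \<beta> (Suc i, j) \<le> \<alpha> (Suc i, j) * \<beta> (i, Suc j)"
proof -
  define g where "g = moment \<alpha> \<beta> (i, j) * \<alpha> (i, j) * \<beta> (i, j)"
  have pos: "0 < \<alpha> k" "0 < \<beta> k" for k
    using weighted_shift_pos[OF assms(1)] by auto
  have "\<beta> (Suc i, j) * \<alpha> (i, j) = \<alpha> (i, Suc j) * \<beta> (i, j)"
    using assms(2) unfolding commuting_shift_def by simp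
  then have "moment \<alpha> \<beta> (Suc i, Suc j) = g * (\<alpha> (i, Suc j) * \<beta> (Suc i, j))"
    by (simp add: g_def moment_Suc_snd moment_Suc_fst[OF assms(2)] power2_eq_square)
      (simp add: mult_ac)
  moreover have "moment \<alpha> \<beta> (Suc (Suc i), j) * moment \<alpha> \<beta> (i, Suc (Suc j))
      = (g * (\<alpha> (Suc i, j) * \<beta> (i, Suc j)))\<^sup>2"
    by (simp add: g_def moment_Suc_snd moment_Suc_fst[OF assms(2)] power2_eq_square mult_ac)
  moreover have "0 < g"
    using moment_pos[OF assms(1)] pos by (simp add: g_def)
  moreover have "0 \<le> \<alpha> (i, Suc j) * \<beta> (Suc i, j)" and "0 \<le> \<alpha> (Suc i, j) * \<beta> (i, Suc j)"
    using pos by (simp_all add: less_imp_le)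
  ultimately show ?thesis
    by (simp add: power_mono_iff)
qed

theorem proposition3p2:
  fixes \<alpha> \<beta> :: "nat \<times> nat \<Rightarrow> real"
  assumes "weighted_shift \<alpha> \<beta>" and "commuting_shift \<alpha> \<beta>"
  shows "(L_positive \<alpha> \<beta> \<longleftrightarrow>
            (\<forall>k1 k2. \<alpha> (k1,k2+1) * \<beta> (k1+1,k2) \<le> \<alpha> (k1+1,k2) * \<beta> (k1,k2+1)))
       \<and> ((\<forall>k1 k2. \<alpha> (k1,k2+1) * \<beta> (k1+1,k2) \<le> \<alpha> (k1+1,k2) * \<beta> (k1,k2+1)) \<longleftrightarrow>
            (\<forall>k1 k2. (moment \<alpha> \<beta> (k1+1,k2+1))\<^sup>2 \<le> moment \<alpha> \<beta> (k1+2,k2) * moment \<alpha> \<beta> (k1,k2+2)))"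
proof -
  have "L_positive \<alpha> \<beta> \<longleftrightarrow>
      (\<forall>k. \<alpha> (add_eps2 k) * \<beta> (add_eps1 k) \<le> \<alpha> (add_eps1 k) * \<beta> (add_eps2 k))"
    using L_positive_imp_weight_ineq[OF assms(1)] weight_ineq_imp_L_positive[OF assms(1)] by blast
  also have "\<dots> \<longleftrightarrow> (\<forall>k1 k2. \<alpha> (k1,k2+1) * \<beta> (k1+1,k2) \<le> \<alpha> (k1+1,k2) * \<beta> (k1,k2+1))"
    by (simp add: add_eps1_def add_eps2_def)
  finally show ?thesis
    using moment_ineq_iff_weight_ineq[OF assms] by (simp add: numeral_2_eq_2)
qed

end
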